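(* Let $d\in\mathbb N$, $\mathcal D=\{1,\dots,d\}$, $d_s\in\mathcal D$, $w:\mathbb Z^d\to[1,\infty)$ a weight function and $f\in\mathcal A^w(\mathbb T^d)$. Suppose there exists a subset of ANOVA terms $U\subseteq U_{d_s}$ and $\varepsilon_1>0$ such that $$\frac{\sum_{\mathbf k\in\mathbb F^{(d)}_{\mathbf u}}|c_{\mathbf k}(f)|}{\sum_{\mathbf k\in\mathbb Z^d}|c_{\mathbf k}(f)|}<\varepsilon_1\quad\text{for every }\mathbf u\in U_{d_s}\setminus U,$$ and $\varepsilon_2>0$ with $\|f-\mathrm T_{d_s}f\|_{\mathrm L_\infty(\mathbb T^d)}/\|f\|_{\mathcal A^w(\mathbb T^d)}<\varepsilon_2$. Then $$\frac{\|f-\mathrm T_Uf\|_{\mathrm L_\infty(\mathbb T^d)}}{\|f\|_{\mathcal A^w(\mathbb T^d)}}\le\varepsilon_2+\sqrt{|U_{d_s}\setminus U|\,\varepsilon_1}.$$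
   Context: $\mathbb T=[0,1)$ with periodic identification; $c_{\mathbf k}(g)$ Fourier coefficients. $\mathcal A^w(\mathbb T^d)=\{g\in\mathrm L_1:\|g\|_{\mathcal A^w}=\sum_{\mathbf k}w(\mathbf k)|c_{\mathbf k}(g)|<\infty\}$. For $\mathbf u\subseteq\mathcal D$: $\mathrm P_{\mathbf u}f(\mathbf x_{\mathbf u})=\int_{\mathbb T^{|\mathcal D\setminus\mathbf u|}}f(\mathbf x)\,d\mathbf x_{\mathcal D\setminus\mathbf u}$, ANOVA terms $f_{\mathbf u}=\mathrm P_{\mathbf u}f-\sum_{\mathbf v\subsetneq\mathbf u}f_{\mathbf v}$ (recursively), $\mathbb F^{(d)}_{\mathbf u}=\{\mathbf k\in\mathbb Z^d:k_j=0\ \forall j\notin\mathbf u,\ k_j\neq0\ \forall j\in\mathbf u\}$. $U_{d_s}=\{\mathbf u\subseteq\mathcal D:|\mathbf u|\le d_s\}$. A subset of ANOVA terms is a $U\subseteq\mathcal P(\mathcal D)$ closed under taking subsets; $\mathrm T_Uf=\sum_{\mathbf u\in U}f_{\mathbf u}$, $\mathrm T_{d_s}=\mathrm T_{U_{d_s}}$. *)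

theory Defs
  imports "HOL-Analysis.Analysis" "HOL-Probability.Essential_Supremum"
begin

text \<open>The torus T^d is represented by the half-open unit cube [0,1)^d in real^'n,
  where the finite type 'n plays the role of the index set D = {1,...,d}, d = CARD('n).\<close>

definition torus :: "(real^'n) set" where
  "torus = {x. \<forall>i. 0 \<le> x$i \<and> x$i < 1}"

definition torus_measure :: "(real^'n) measure" where
  "torus_measure = lebesgue_on torus"

definition fourier_coeff :: "int^'n \<Rightarrow> (real^'n \<Rightarrow> complex) \<Rightarrow> complex" where
  "fourier_coeff k g = (LINT x|torus_measure.
      g x * cis (- 2 * pi * (\<Sum>i\<in>UNIV. real_of_int (k$i) * x$i)))"

definition A_norm :: "(int^'n \<Rightarrow> real) \<Rightarrow> (real^'n \<Rightarrow> complex) \<Rightarrow> real" where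
  "A_norm w g = (\<Sum>\<^sub>\<infinity>k. w k * cmod (fourier_coeff k g))"

definition in_A :: "(int^'n \<Rightarrow> real) \<Rightarrow> (real^'n \<Rightarrow> complex) \<Rightarrow> bool" where
  "in_A w g \<longleftrightarrow> integrable torus_measure g \<and>
     (\<lambda>k. w k * cmod (fourier_coeff k g)) summable_on UNIV"

definition Linf_norm :: "(real^'n \<Rightarrow> complex) \<Rightarrow> real" where
  "Linf_norm g = real_of_ereal (esssup torus_measure (\<lambda>x. ereal (cmod (g x))))"

text \<open>The result is represented as a
  function on the full cube that depends only on the coordinates in u; the
  coordinates of y in u are dummies (the cube has measure 1).\<close>
definition P_op :: "'n set \<Rightarrow> (real^'n \<Rightarrow> complex) \<Rightarrow> real^'n \<Rightarrow> complex" where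
  "P_op u g x = (LINT y|torus_measure. g (\<chi> i. if i \<in> u then x$i else y$i))"

function anova :: "(real^'n::finite \<Rightarrow> complex) \<Rightarrow> 'n set \<Rightarrow> real^'n \<Rightarrow> complex" where
  "anova g u = (\<lambda>x. P_op u g x - (\<Sum>v\<in>{v. v \<subset> u}. anova g v x))"
  by auto
termination
  by (relation "Wellfounded.measure (\<lambda>(g, u). card u)") (auto intro: psubset_card_mono)

definition anova_trunc :: "'n set set \<Rightarrow> (real^'n::finite \<Rightarrow> complex) \<Rightarrow> real^'n \<Rightarrow> complex" where
  "anova_trunc U g = (\<lambda>x. \<Sum>u\<in>U. anova g u x)"

definition U_ds :: "nat \<Rightarrow> 'n::finite set set" where
  "U_ds ds = {u. card u \<le> ds}"

definition anova_subset :: "'n set set \<Rightarrow> bool" where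
  "anova_subset U \<longleftrightarrow> (\<forall>u\<in>U. \<forall>v. v \<subseteq> u \<longrightarrow> v \<in> U)"

definition freq_F :: "'n set \<Rightarrow> (int^'n) set" where
  "freq_F u = {k. (\<forall>j. j \<notin> u \<longrightarrow> k$j = 0) \<and> (\<forall>j\<in>u. k$j \<noteq> 0)}"

end

theory Submission
  imports Defs
begin

(* Since w >= 1, the Fourier coefficients c_k of f are absolutely summable. An integrable function
   on the torus all of whose Fourier coefficients vanish is zero almost everywhere: it is orthogonal
   to every trigonometric polynomial, hence (Stone-Weierstrass) to every continuous function of
   (e^(2 pi i x_j))_j, hence to the indicator of every box and finally of every Borel set. So f is
   a.e. equal to its absolutely convergent Fourier series. The projection P_u keeps exactly the
   frequencies supported in u, so the ANOVA term f_u is a.e. the partial series over F_u, and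
   |f_u| <= sum_{k in F_u} |c_k|. Consequently |f - T_U f| <= |f - T_ds f| + B a.e. with
   B = sum_{u in U_ds - U} sum_{k in F_u} |c_k|; the F_u being disjoint,
   B <= min 1 (|U_ds - U| eps1) * sum_k |c_k| <= sqrt (|U_ds - U| eps1) * ||f||_(A^w). *)

section \<open>Characters and the torus measure\<close>

definition torus_char :: "int^'n::finite \<Rightarrow> real^'n \<Rightarrow> complex" where
  "torus_char k x = cis (2 * pi * (\<Sum>i\<in>UNIV. real_of_int (k$i) * x$i))"

lemma fourier_coeff_conv_torus_char:
  "fourier_coeff k g = (LINT x|torus_measure. g x * torus_char (-k) x)"
  unfolding fourier_coeff_def torus_char_def by (simp add: sum_negf)

lemma torus_char_add: "torus_char (k + m) x = torus_char k x * torus_char m x"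
  unfolding torus_char_def by (simp add: cis_mult sum.distrib distrib_left distrib_right)

lemma torus_char_0 [simp]: "torus_char 0 x = 1"
  unfolding torus_char_def by simp

lemma norm_torus_char [simp]: "norm (torus_char k x) = 1"
  unfolding torus_char_def by simp

lemma continuous_on_torus_char: "continuous_on UNIV (torus_char k)"
  unfolding torus_char_def by (intro continuous_intros)

lemma torus_char_eq_prod: "torus_char m x = (\<Prod>i\<in>UNIV. cis (2 * pi * real_of_int (m$i) * x$i))"
proof -
  have "torus_char m x = exp (\<Sum>i\<in>UNIV. \<i> * complex_of_real (2 * pi * real_of_int (m$i) * x$i))"
    unfolding torus_char_def cis_conv_exp by (simp add: sum_distrib_left mult_ac)
  also have "\<dots> = (\<Prod>i\<in>UNIV. cis (2 * pi * real_of_int (m$i) * x$i))"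
    by (simp add: exp_sum cis_conv_exp)
  finally show ?thesis .
qed

lemma torus_char_axis:
  fixes i :: "'n::finite" and x :: "real^'n"
  shows "torus_char (axis i 1) x = cis (2 * pi * x$i)"
    and "torus_char (- axis i 1) x = cis (- (2 * pi * x$i))"
proof -
  have "(\<Sum>j\<in>UNIV. real_of_int ((axis i s :: int^'n)$j) * x$j) = real_of_int s * x$i" for s
  proof -
    have "(\<Sum>j\<in>UNIV. real_of_int ((axis i s :: int^'n)$j) * x$j)
        = (\<Sum>j\<in>UNIV. if j = i then real_of_int s * x$j else 0)"
      by (rule sum.cong) (auto simp: axis_def)
    then show ?thesis by simp
  qed
  moreover have "- axis i 1 = (axis i (-1) :: int^'n)"
    by (simp add: vec_eq_iff axis_def)
  ultimately show "torus_char (axis i 1) x = cis (2 * pi * x$i)"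
    and "torus_char (- axis i 1) x = cis (- (2 * pi * x$i))"
    by (simp_all add: torus_char_def)
qed

lemma torus_in_borel: "torus \<in> sets borel"
  unfolding torus_def by measurable

lemma torus_in_lebesgue: "torus \<in> sets lebesgue"
  using torus_in_borel by (metis sets_lborel sets_completionI_sets)

lemma emeasure_lborel_torus: "emeasure lborel (torus :: (real^'n::finite) set) = 1"
proof -
  have "box 0 1 \<subseteq> (torus :: (real^'n) set)" "torus \<subseteq> (cbox 0 1 :: (real^'n) set)"
    by (auto simp: torus_def mem_box Basis_vec_def cart_eq_inner_axis[symmetric] less_imp_le)
  moreover have "(\<Prod>b\<in>(Basis::(real^'n) set). (1::real^'n) \<bullet> b) = 1"
    by (rule prod.neutral) (auto simp: Basis_vec_def inner_axis)
  then have "emeasure lborel (box 0 (1::real^'n)) = 1" "emeasure lborel (cbox 0 (1::real^'n)) = 1"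
    by (auto simp: emeasure_lborel_box_eq emeasure_lborel_cbox_eq Basis_vec_def inner_axis)
  ultimately show ?thesis
    by (metis antisym emeasure_mono sets_lborel torus_in_borel box_borel cbox_borel)
qed

lemma space_torus_measure [simp]: "space torus_measure = torus"
  by (simp add: torus_measure_def)

lemma emeasure_torus_measure: "emeasure (torus_measure :: (real^'n::finite) measure) torus = 1"
proof -
  have "emeasure (torus_measure :: (real^'n) measure) torus = emeasure lebesgue (torus :: (real^'n) set)"
    unfolding torus_measure_def using torus_in_lebesgue by (intro emeasure_restrict_space) simp_all
  also have "\<dots> = emeasure lborel (torus :: (real^'n) set)"
    by (subst emeasure_completion, rule torus_in_lebesgue, subst main_part) (use torus_in_borel in simp_all)
  finally show ?thesis using emeasure_lborel_torus by simp
qed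

lemma measure_torus_measure [simp]: "measure (torus_measure :: (real^'n::finite) measure) torus = 1"
  by (simp add: measure_def emeasure_torus_measure)

lemma finite_measure_torus_measure: "finite_measure (torus_measure :: (real^'n::finite) measure)"
  by (rule finite_measureI) (simp add: emeasure_torus_measure)

lemma borel_measurable_torus_measureI:
  "g \<in> borel_measurable borel \<Longrightarrow> g \<in> borel_measurable torus_measure"
  unfolding torus_measure_def by (intro measurable_restrict_space1 measurable_completion) simp

lemma continuous_imp_measurable_torus_measure:
  "continuous_on UNIV g \<Longrightarrow> g \<in> borel_measurable torus_measure"
  by (intro borel_measurable_torus_measureI borel_measurable_continuous_onI)

lemma AE_torus_measure_if_AE_lebesgue: "(AE x in lebesgue. P x) \<Longrightarrow> AE x in torus_measure. P x"
  unfolding torus_measure_def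
  by (subst AE_restrict_space_iff) (auto simp: torus_in_lebesgue elim: eventually_mono)

lemma AE_torus_measure_if_AE_lborel: "(AE x in lborel. P x) \<Longrightarrow> AE x in torus_measure. P x"
  by (rule AE_torus_measure_if_AE_lebesgue) (simp add: AE_completion)

lemma AE_lborel_if_AE_torus_measure:
  assumes "AE x in torus_measure. P x"
  shows "AE x in lborel. x \<in> torus \<longrightarrow> P x"
proof -
  have "AE x in lebesgue. x \<in> torus \<longrightarrow> P x"
    using assms unfolding torus_measure_def
    by (subst (asm) AE_restrict_space_iff) (auto simp: torus_in_lebesgue)
  then show ?thesis by (simp add: AE_completion_iff)
qed

lemma integral_torus_measure_eq_lborel:
  fixes g :: "real^'n::finite \<Rightarrow> complex"
  assumes [measurable]: "g \<in> borel_measurable borel"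
  shows "(LINT x|torus_measure. g x) = (LINT x|lborel. indicator torus x *\<^sub>R g x)"
proof -
  have [measurable]: "torus \<in> sets lborel" using torus_in_borel by simp
  have "(LINT x|torus_measure. g x) = (LINT x|lebesgue. indicator torus x *\<^sub>R g x)"
    unfolding torus_measure_def using torus_in_lebesgue by (subst integral_restrict_space) auto
  also have "\<dots> = (LINT x|lborel. indicator torus x *\<^sub>R g x)"
    by (intro integral_completion) measurable
  finally show ?thesis .
qed

lemma prod_Basis_cart:
  fixes h :: "real^'n::finite \<Rightarrow> 'a::comm_monoid_mult"
  shows "(\<Prod>b\<in>Basis. h b) = (\<Prod>i\<in>UNIV. h (axis i 1))"
proof -
  have inj: "inj (\<lambda>i. axis i (1::real) :: real^'n)"
    by (rule injI) (simp add: axis_eq_axis)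
  have Basis: "(Basis :: (real^'n) set) = (\<lambda>i. axis i 1) ` UNIV"
    by (auto simp: Basis_vec_def)
  show ?thesis
    by (simp add: Basis prod.reindex[OF inj])
qed

lemma integral_lborel_prod_coords:
  fixes f :: "'n::finite \<Rightarrow> real \<Rightarrow> complex"
  assumes int: "\<And>i. integrable lborel (f i)"
  shows "(LINT x|lborel. (\<Prod>i\<in>UNIV. f i (x$i))) = (\<Prod>i\<in>UNIV. LINT t|lborel. f i t)"
proof -
  interpret product_sigma_finite "\<lambda>_::real^'n. (lborel :: real measure)"
    by (simp add: product_sigma_finite_def lborel.sigma_finite_measure_axioms)
  define idx :: "real^'n \<Rightarrow> 'n" where "idx = inv (\<lambda>i. axis i 1)"
  have idx: "idx (axis i 1) = i" for i
    unfolding idx_def by (rule inv_f_f) (simp add: inj_def axis_eq_axis)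
  have [measurable]: "f (idx b) \<in> borel_measurable lborel" for b
    using int by auto
  have "(LINT x|lborel. (\<Prod>i\<in>UNIV. f i (x$i))) = (LINT x|lborel. (\<Prod>b\<in>Basis. f (idx b) (x \<bullet> b)))"
    by (simp add: prod_Basis_cart idx cart_eq_inner_axis)
  also have "\<dots> = (LINT p|(\<Pi>\<^sub>M b\<in>Basis. lborel). (\<Prod>b\<in>Basis. f (idx b) ((\<Sum>b'\<in>Basis. p b' *\<^sub>R b') \<bullet> b)))"
    by (subst lborel_eq) (rule integral_distr; measurable)
  also have "\<dots> = (LINT p|(\<Pi>\<^sub>M b\<in>Basis. lborel). (\<Prod>b\<in>Basis. f (idx b) (p b)))"
    by (intro Bochner_Integration.integral_cong refl prod.cong)
       (simp add: inner_sum_left inner_Basis if_distrib sum.delta cong: if_cong)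
  also have "\<dots> = (\<Prod>b\<in>Basis. LINT t|lborel. f (idx b) t)"
    by (rule product_integral_prod) (auto simp: int)
  also have "\<dots> = (\<Prod>i\<in>UNIV. LINT t|lborel. f i t)"
    by (simp add: prod_Basis_cart idx)
  finally show ?thesis .
qed

lemma integral_cis_unit_interval:
  fixes j :: int
  shows "(LINT t|lborel. indicator {0..<1} t *\<^sub>R cis (2 * pi * real_of_int j * t))
    = (if j = 0 then 1 else 0)"
proof -
  let ?f = "\<lambda>t. cis (2 * pi * real_of_int j * t)"
  have cont: "continuous_on {0..1} ?f" by (intro continuous_intros)
  have [measurable]: "?f \<in> borel_measurable borel"
    by (intro borel_measurable_continuous_onI continuous_intros)
  have "(LINT t|lborel. indicator {0..<1} t *\<^sub>R ?f t) = (LINT t|lborel. indicator {0..1} t *\<^sub>R ?f t)"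
    by (intro integral_cong_AE)
       (use AE_lborel_singleton[of "1::real"] in \<open>auto elim!: eventually_mono split: split_indicator\<close>)
  also have "\<dots> = integral {0..1} ?f"
    using set_borel_integral_eq_integral[of "{0..1}" ?f] borel_integrable_compact[OF _ cont]
    by (simp add: set_lebesgue_integral_def set_integrable_def)
  also have "\<dots> = (if j = 0 then 1 else 0)"
  proof (cases "j = 0")
    case False
    define A where "A = \<i> * complex_of_real (2 * pi * real_of_int j)"
    have A: "A \<noteq> 0" "exp (t *\<^sub>R A) = ?f t" for t
      using False by (simp_all add: A_def cis_conv_exp scaleR_conv_of_real mult_ac)
    have "((\<lambda>t. exp (t *\<^sub>R A) / A) has_vector_derivative ?f t) (at t within {0..1})" for t
    proof -
      have "((\<lambda>t. exp (t *\<^sub>R A) / A) has_vector_derivative exp (t *\<^sub>R A) * A / A) (at t within {0..1})"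
        by (intro has_vector_derivative_divide exp_scaleR_has_vector_derivative_right)
      also have "exp (t *\<^sub>R A) * A / A = ?f t"
        using A by simp
      finally show ?thesis .
    qed
    then have "(?f has_integral (exp (1 *\<^sub>R A) / A - exp (0 *\<^sub>R A) / A)) {0..1}"
      by (intro fundamental_theorem_of_calculus) auto
    moreover have "exp (1 *\<^sub>R A) = 1"
      by (simp only: A(2)) (simp add: cis.ctr cos_int_2pin sin_int_2pin complex_eq_iff)
    ultimately show ?thesis using False by (simp add: integral_unique)
  qed simp
  finally show ?thesis .
qed

lemma indicator_torus_eq_prod: "(indicator torus x :: real) = (\<Prod>i\<in>UNIV. indicator {0..<1} (x$i))"
  by (auto simp: torus_def indicator_def intro: prod_zero)

lemma integral_torus_char:
  fixes m :: "int^'n::finite"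
  shows "(LINT x|torus_measure. torus_char m x) = (if m = 0 then 1 else 0)"
proof -
  define G where "G i = (\<lambda>t. indicator {0..<1} t *\<^sub>R cis (2 * pi * real_of_int (m$i) * t))" for i
  have intG: "integrable lborel (G i)" for i
  proof -
    have [measurable]: "(\<lambda>t. cis (2 * pi * real_of_int (m$i) * t)) \<in> borel_measurable borel"
      by (intro borel_measurable_continuous_onI continuous_intros)
    have "integrable lborel (\<lambda>t. indicator {0..1} t *\<^sub>R cis (2 * pi * real_of_int (m$i) * t))"
      by (intro borel_integrable_compact) (auto intro!: continuous_intros)
    then show ?thesis unfolding G_def
      by (rule integrable_cong_AE_imp)
         (use AE_lborel_singleton[of "1::real"] in \<open>auto elim!: eventually_mono split: split_indicator\<close>)
  qed
  have "(LINT x|torus_measure. torus_char m x) = (LINT x|lborel. indicator torus x *\<^sub>R torus_char m x)"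
    by (intro integral_torus_measure_eq_lborel borel_measurable_continuous_onI continuous_on_torus_char)
  also have "\<dots> = (LINT x|lborel. (\<Prod>i\<in>UNIV. G i (x$i)))"
    by (simp add: indicator_torus_eq_prod torus_char_eq_prod G_def scaleR_conv_of_real
        prod.distrib of_real_prod)
  also have "\<dots> = (\<Prod>i\<in>UNIV. if m$i = 0 then 1 else 0)"
    by (subst integral_lborel_prod_coords[OF intG]) (simp add: G_def integral_cis_unit_interval)
  also have "\<dots> = (if m = 0 then 1 else 0)"
    by (auto simp: vec_eq_iff intro: prod_zero)
  finally show ?thesis .
qed

section \<open>Absolutely convergent Fourier series\<close>

lemma integral_suminf_bounded:
  fixes c :: "nat \<Rightarrow> complex" and \<phi> :: "nat \<Rightarrow> 'a \<Rightarrow> complex"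
  assumes "finite_measure M" and c: "summable (\<lambda>n. norm (c n))"
    and meas: "\<And>n. \<phi> n \<in> borel_measurable M" and bd: "\<And>n x. x \<in> space M \<Longrightarrow> norm (\<phi> n x) \<le> 1"
  shows "integrable M (\<lambda>x. \<Sum>n. c n * \<phi> n x)"
    and "(LINT x|M. (\<Sum>n. c n * \<phi> n x)) = (\<Sum>n. c n * (LINT x|M. \<phi> n x))"
proof -
  interpret finite_measure M by fact
  define f where "f n = (\<lambda>x. c n * \<phi> n x)" for n
  have norm_f: "norm (f n x) \<le> norm (c n)" if "x \<in> space M" for n x
    using bd[OF that, of n] by (auto simp: f_def norm_mult intro: mult_left_le)
  have int_f: "integrable M (f n)" for n
    by (rule integrable_const_bound[where B="norm (c n)"])
       (use norm_f meas in \<open>auto simp: f_def intro!: AE_I2\<close>)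
  have "AE x in M. summable (\<lambda>n. norm (f n x))"
    by (intro AE_I2 summable_comparison_test'[OF c]) (use norm_f in auto)
  moreover have "summable (\<lambda>n. LINT x|M. norm (f n x))"
  proof (rule summable_comparison_test'[OF summable_mult2[OF c, of "measure M (space M)"]])
    show "norm (LINT x|M. norm (f n x)) \<le> norm (c n) * measure M (space M)" for n
      using integral_mono[OF integrable_norm[OF int_f] integrable_const[of "norm (c n)"] norm_f]
      by (simp add: mult.commute)
  qed
  ultimately have "integrable M (\<lambda>x. \<Sum>n. f n x)" "(LINT x|M. (\<Sum>n. f n x)) = (\<Sum>n. LINT x|M. f n x)"
    using integrable_suminf integral_suminf int_f by blast+
  then show "integrable M (\<lambda>x. \<Sum>n. c n * \<phi> n x)"
    and "(LINT x|M. (\<Sum>n. c n * \<phi> n x)) = (\<Sum>n. c n * (LINT x|M. \<phi> n x))"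
    by (simp_all add: f_def)
qed

lemma infinite_UNIV_int_vec: "infinite (UNIV :: (int^'n::finite) set)"
proof
  assume "finite (UNIV :: (int^'n) set)"
  then have "finite (range (\<lambda>z::int. (\<chi> i. z) :: int^'n))"
    by (rule finite_subset[rotated]) simp
  moreover have "inj (\<lambda>z::int. (\<chi> i. z) :: int^'n)"
    by (rule injI) (metis vec_lambda_beta)
  ultimately show False
    by (metis finite_imageD infinite_UNIV_int)
qed

lemma infsum_eq_suminf_int_vec:
  fixes g :: "int^'n::finite \<Rightarrow> 'a::banach"
  assumes "(\<lambda>k. norm (g k)) summable_on UNIV"
  defines "e \<equiv> from_nat_into (UNIV :: (int^'n) set)"
  shows "summable (\<lambda>n. norm (g (e n)))" and "infsum g UNIV = (\<Sum>n. g (e n))"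
proof -
  have bij: "bij_betw e UNIV UNIV"
    unfolding e_def by (rule bij_betw_from_nat_into) (auto simp: infinite_UNIV_int_vec)
  have norm_summable: "(\<lambda>n. norm (g (e n))) summable_on UNIV"
    using summable_on_reindex_bij_betw[OF bij, of "\<lambda>k. norm (g k)"] assms by simp
  then show "summable (\<lambda>n. norm (g (e n)))"
    using has_sum_imp_sums has_sum_infsum sums_summable by blast
  have "infsum g UNIV = infsum (\<lambda>n. g (e n)) UNIV"
    using infsum_reindex_bij_betw[OF bij, of g] by simp
  also have "\<dots> = (\<Sum>n. g (e n))"
    using has_sum_imp_sums[OF has_sum_infsum[OF abs_summable_summable[OF norm_summable]]]
    by (simp add: sums_iff)
  finally show "infsum g UNIV = (\<Sum>n. g (e n))" .
qed

lemma abs_summable_mult_bounded: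
  fixes c b :: "'a \<Rightarrow> 'b::real_normed_div_algebra"
  assumes "(\<lambda>k. norm (c k)) summable_on UNIV" and "\<And>k. norm (b k) \<le> K"
  shows "(\<lambda>k. norm (c k * b k)) summable_on A"
proof -
  have "(\<lambda>k. norm (c k * b k)) summable_on UNIV"
    by (rule Infinite_Sum.abs_summable_on_comparison_test'[OF summable_on_cmult_left[OF assms(1), of K]])
       (simp add: norm_mult mult_left_mono assms(2))
  then show ?thesis
    by (rule summable_on_subset_banach) simp
qed

lemma integral_infsum_bounded:
  fixes c :: "int^'n::finite \<Rightarrow> complex" and \<phi> :: "int^'n \<Rightarrow> 'a \<Rightarrow> complex"
  assumes fin: "finite_measure M" and c: "(\<lambda>k. norm (c k)) summable_on UNIV"
    and meas: "\<And>k. \<phi> k \<in> borel_measurable M" and bd: "\<And>k x. x \<in> space M \<Longrightarrow> norm (\<phi> k x) \<le> 1"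
  shows "integrable M (\<lambda>x. \<Sum>\<^sub>\<infinity>k. c k * \<phi> k x)"
    and "(LINT x|M. (\<Sum>\<^sub>\<infinity>k. c k * \<phi> k x)) = (\<Sum>\<^sub>\<infinity>k. c k * (LINT x|M. \<phi> k x))"
proof -
  interpret finite_measure M by (rule fin)
  define e where "e = from_nat_into (UNIV :: (int^'n) set)"
  note series = infsum_eq_suminf_int_vec[where 'n='n, folded e_def]
  note suminf = integral_suminf_bounded[OF fin series(1)[OF c], of "\<lambda>n. \<phi> (e n)", OF meas bd]
  have pointwise: "(\<Sum>\<^sub>\<infinity>k. c k * \<phi> k x) = (\<Sum>n. c (e n) * \<phi> (e n) x)" if "x \<in> space M" for x
    using bd[OF that] by (intro series(2) abs_summable_mult_bounded[OF c]) auto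
  have "integrable M (\<lambda>x. \<Sum>\<^sub>\<infinity>k. c k * \<phi> k x) \<longleftrightarrow> integrable M (\<lambda>x. \<Sum>n. c (e n) * \<phi> (e n) x)"
    by (rule Bochner_Integration.integrable_cong) (simp_all add: pointwise)
  with suminf(1) show "integrable M (\<lambda>x. \<Sum>\<^sub>\<infinity>k. c k * \<phi> k x)" by simp
  have "norm (LINT x|M. \<phi> k x) \<le> measure M (space M)" for k
  proof -
    have "norm (LINT x|M. \<phi> k x) \<le> (LINT x|M. norm (\<phi> k x))"
      by (rule integral_norm_bound)
    also have "\<dots> \<le> (LINT x|M. 1)"
      by (intro integral_mono integrable_norm integrable_const_bound[where B=1]) (auto simp: bd meas)
    finally show ?thesis by simp
  qed
  then have "(\<lambda>k. norm (c k * (LINT x|M. \<phi> k x))) summable_on UNIV"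
    by (intro abs_summable_mult_bounded[OF c])
  then have "(\<Sum>\<^sub>\<infinity>k. c k * (LINT x|M. \<phi> k x)) = (\<Sum>n. c (e n) * (LINT x|M. \<phi> (e n) x))"
    by (rule series(2))
  moreover have "(LINT x|M. (\<Sum>\<^sub>\<infinity>k. c k * \<phi> k x)) = (LINT x|M. (\<Sum>n. c (e n) * \<phi> (e n) x))"
    by (rule Bochner_Integration.integral_cong) (simp_all add: pointwise)
  ultimately show "(LINT x|M. (\<Sum>\<^sub>\<infinity>k. c k * \<phi> k x)) = (\<Sum>\<^sub>\<infinity>k. c k * (LINT x|M. \<phi> k x))"
    using suminf(2) by simp
qed

definition fourier_series :: "(int^'n::finite \<Rightarrow> complex) \<Rightarrow> real^'n \<Rightarrow> complex" where
  "fourier_series c x = (\<Sum>\<^sub>\<infinity>k. c k * torus_char k x)"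

lemma abs_summable_mult_torus_char:
  "(\<lambda>k. norm (c k)) summable_on UNIV \<Longrightarrow> (\<lambda>k. norm (c k * torus_char k x)) summable_on A"
  by (rule abs_summable_mult_bounded[where K=1]) simp_all

lemma norm_infsum_mult_torus_char_le:
  assumes "(\<lambda>k. norm (c k)) summable_on UNIV"
  shows "norm (\<Sum>\<^sub>\<infinity>k\<in>A. c k * torus_char k x) \<le> (\<Sum>\<^sub>\<infinity>k\<in>A. norm (c k))"
  using norm_infsum_bound[OF abs_summable_mult_torus_char[OF assms]] by (simp add: norm_mult)

lemma
  assumes c: "(\<lambda>k. norm (c k)) summable_on UNIV"
  shows integrable_fourier_series: "integrable torus_measure (fourier_series c)"
    and fourier_coeff_fourier_series: "fourier_coeff m (fourier_series c) = c m"
proof -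
  note swap = integral_infsum_bounded[OF finite_measure_torus_measure c]
  show "integrable torus_measure (fourier_series c)"
    unfolding fourier_series_def
    by (rule swap(1)) (auto intro: continuous_imp_measurable_torus_measure continuous_on_torus_char)
  have "fourier_coeff m (fourier_series c) = (LINT x|torus_measure. fourier_series c x * torus_char (- m) x)"
    by (rule fourier_coeff_conv_torus_char)
  also have "\<dots> = (LINT x|torus_measure. (\<Sum>\<^sub>\<infinity>k. c k * torus_char (k - m) x))"
    unfolding fourier_series_def
    by (simp flip: infsum_cmult_left' add: torus_char_add[symmetric] mult.assoc)
  also have "\<dots> = (\<Sum>\<^sub>\<infinity>k. c k * (LINT x|torus_measure. torus_char (k - m) x))"
    by (rule swap(2)) (auto intro: continuous_imp_measurable_torus_measure continuous_on_torus_char)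
  also have "\<dots> = (\<Sum>\<^sub>\<infinity>k\<in>{m}. c k)"
    by (rule infsum_cong_neutral) (auto simp: integral_torus_char)
  finally show "fourier_coeff m (fourier_series c) = c m"
    by simp
qed

section \<open>Uniqueness of Fourier coefficients\<close>

inductive trig_poly :: "(real^'n::finite \<Rightarrow> complex) \<Rightarrow> bool" where
  trig_poly_char: "trig_poly (\<lambda>x. a * torus_char k x)"
| trig_poly_add: "trig_poly p \<Longrightarrow> trig_poly q \<Longrightarrow> trig_poly (\<lambda>x. p x + q x)"

lemma trig_poly_const: "trig_poly (\<lambda>x. a)"
  using trig_poly_char[of a 0] by simp

lemma trig_poly_cmult: "trig_poly p \<Longrightarrow> trig_poly (\<lambda>x. a * p x)"
proof (induction rule: trig_poly.induct)
  case (trig_poly_char b k)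
  then show ?case using trig_poly.trig_poly_char[of "a * b" k] by (simp add: mult_ac)
next
  case (trig_poly_add p q)
  then show ?case using trig_poly.trig_poly_add by (simp add: distrib_left)
qed

lemma trig_poly_mult: "trig_poly p \<Longrightarrow> trig_poly q \<Longrightarrow> trig_poly (\<lambda>x. p x * q x)"
proof (induction arbitrary: q rule: trig_poly.induct)
  case (trig_poly_char a k)
  from trig_poly_char.prems show ?case
  proof (induction rule: trig_poly.induct)
    case (trig_poly_char b m)
    then show ?case using trig_poly.trig_poly_char[of "a * b" "k + m"] by (simp add: torus_char_add mult_ac)
  next
    case (trig_poly_add p q)
    then show ?case using trig_poly.trig_poly_add by (simp add: distrib_left)
  qed
next
  case (trig_poly_add p1 p2)
  then show ?case using trig_poly.trig_poly_add[OF trig_poly_add.IH] by (simp add: distrib_right)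
qed

lemma trig_poly_sum: "finite A \<Longrightarrow> (\<And>i. i \<in> A \<Longrightarrow> trig_poly (p i)) \<Longrightarrow> trig_poly (\<lambda>x. \<Sum>i\<in>A. p i x)"
proof (induction rule: finite_induct)
  case empty
  then show ?case using trig_poly_const[of 0] by simp
next
  case (insert a F)
  then show ?case using trig_poly_add[of "p a" "\<lambda>x. \<Sum>i\<in>F. p i x"] by simp
qed

lemma trig_poly_cos_sin:
  shows "trig_poly (\<lambda>x. complex_of_real (cos (2 * pi * x$i)))"
    and "trig_poly (\<lambda>x. complex_of_real (sin (2 * pi * x$i)))"
proof -
  have cos: "complex_of_real (cos (2 * pi * x$i))
      = 1/2 * torus_char (axis i 1) x + 1/2 * torus_char (- axis i 1) x" for x
    by (simp add: torus_char_axis complex_eq_iff)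
  have sin: "complex_of_real (sin (2 * pi * x$i))
      = - \<i>/2 * torus_char (axis i 1) x + \<i>/2 * torus_char (- axis i 1) x" for x
    by (simp add: torus_char_axis complex_eq_iff)
  show "trig_poly (\<lambda>x. complex_of_real (cos (2 * pi * x$i)))"
    and "trig_poly (\<lambda>x. complex_of_real (sin (2 * pi * x$i)))"
    unfolding cos sin by (intro trig_poly_add trig_poly_char)+
qed

definition torus_embedding :: "real^'n::finite \<Rightarrow> complex^'n" where
  "torus_embedding x = (\<chi> i. cis (2 * pi * x$i))"

lemma trig_poly_inner_Basis:
  assumes "b \<in> (Basis :: (complex^'n::finite) set)"
  shows "trig_poly (\<lambda>x. complex_of_real (torus_embedding x \<bullet> b))"
proof -
  obtain i u where b: "b = axis i u" "u \<in> {1, \<i>}"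
    using assms by (auto simp: Basis_vec_def Basis_complex_def)
  then consider "b = axis i 1" | "b = axis i \<i>"
    by auto
  then show ?thesis
    by cases (use trig_poly_cos_sin[of i] in \<open>simp_all add: inner_axis torus_embedding_def inner_complex_def\<close>)
qed

lemma trig_poly_real_polynomial:
  fixes q :: "complex^'n::finite \<Rightarrow> real"
  assumes "real_polynomial_function q"
  shows "trig_poly (\<lambda>x. complex_of_real (q (torus_embedding x)))"
  using assms
proof (induction rule: real_polynomial_function.induct)
  case (linear f)
  have lin: "linear f"
    using linear.hyps bounded_linear.linear by blast
  have eq: "f z = (\<Sum>b\<in>Basis. (z \<bullet> b) * f b)" for z
  proof -
    have "f z = f (\<Sum>b\<in>Basis. (z \<bullet> b) *\<^sub>R b)"
      by (simp add: euclidean_representation)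
    then show ?thesis
      by (simp add: linear_sum[OF lin] linear_scale[OF lin])
  qed
  have "complex_of_real (f (torus_embedding x))
      = (\<Sum>b\<in>Basis. complex_of_real (f b) * complex_of_real (torus_embedding x \<bullet> b))" for x
    by (subst eq) (simp add: mult_ac)
  moreover have "trig_poly (\<lambda>x. \<Sum>b\<in>Basis. complex_of_real (f b) * complex_of_real (torus_embedding x \<bullet> b))"
    by (intro trig_poly_sum trig_poly_cmult trig_poly_inner_Basis) auto
  ultimately show ?case by simp
next
  case (const c)
  then show ?case by (rule trig_poly_const)
next
  case (add f g)
  then show ?case using trig_poly_add[OF add.IH] by simp
next
  case (mult f g)
  then show ?case using trig_poly_mult[OF mult.IH] by simp
qed

lemma trig_poly_polynomial:
  fixes g :: "complex^'n::finite \<Rightarrow> complex"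
  assumes "polynomial_function g"
  shows "trig_poly (\<lambda>x. g (torus_embedding x))"
proof -
  have "real_polynomial_function (Re \<circ> g)" "real_polynomial_function (Im \<circ> g)"
    using assms bounded_linear_Re bounded_linear_Im unfolding polynomial_function_def by blast+
  then have "trig_poly (\<lambda>x. complex_of_real (Re (g (torus_embedding x)))
      + \<i> * complex_of_real (Im (g (torus_embedding x))))"
    using trig_poly_real_polynomial by (intro trig_poly_add trig_poly_cmult) (simp_all add: o_def)
  moreover have "complex_of_real (Re z) + \<i> * complex_of_real (Im z) = z" for z
    by (simp add: complex_eq_iff)
  ultimately show ?thesis
    by simp
qed

lemma integral_mult_trig_poly_eq_0:
  assumes h: "integrable torus_measure h" and h_coeff: "\<And>k. fourier_coeff k h = 0"
    and "trig_poly p"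
  shows "integrable torus_measure (\<lambda>x. h x * p x) \<and> (LINT x|torus_measure. h x * p x) = 0"
  using \<open>trig_poly p\<close>
proof (induction rule: trig_poly.induct)
  case (trig_poly_char a k)
  have [measurable]: "torus_char k \<in> borel_measurable torus_measure" "h \<in> borel_measurable torus_measure"
    using h by (auto intro: continuous_imp_measurable_torus_measure continuous_on_torus_char)
  have "integrable torus_measure (\<lambda>x. h x * torus_char k x)"
    by (rule Bochner_Integration.integrable_bound[OF h]) (auto simp: norm_mult)
  moreover have "(LINT x|torus_measure. h x * torus_char k x) = 0"
    using h_coeff[of "- k"] by (simp add: fourier_coeff_conv_torus_char)
  ultimately show ?case
    by (simp add: mult.left_commute[of _ a])
next
  case (trig_poly_add p q)
  then show ?case by (simp add: distrib_left)
qed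

lemma torus_embedding_in_cball: "torus_embedding x \<in> cball (0 :: complex^'n::finite) CARD('n)"
proof -
  have "norm (torus_embedding x :: complex^'n) \<le> (\<Sum>i\<in>UNIV. norm ((torus_embedding x :: complex^'n)$i))"
    unfolding norm_vec_def by (rule L2_set_le_sum) simp
  then show ?thesis by (simp add: torus_embedding_def)
qed

lemma continuous_on_torus_embedding: "continuous_on UNIV (torus_embedding :: real^'n::finite \<Rightarrow> _)"
  unfolding torus_embedding_def by (intro continuous_on_vec_lambda continuous_intros)

lemma integrable_mult_continuous_embedding:
  fixes \<phi> :: "complex^'n::finite \<Rightarrow> complex"
  assumes h: "integrable torus_measure h" and \<phi>: "continuous_on UNIV \<phi>"
  shows "integrable torus_measure (\<lambda>x. h x * \<phi> (torus_embedding x))"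
proof -
  define K where "K = cball (0 :: complex^'n) CARD('n)"
  have "bounded (\<phi> ` K)"
    unfolding K_def by (intro compact_imp_bounded compact_continuous_image continuous_on_subset[OF \<phi>]) auto
  then obtain B where B: "\<And>z. z \<in> K \<Longrightarrow> norm (\<phi> z) \<le> B"
    by (meson bounded_iff imageI)
  have [measurable]: "h \<in> borel_measurable torus_measure"
    using h by auto
  have [measurable]: "(\<lambda>x. \<phi> (torus_embedding x)) \<in> borel_measurable torus_measure"
    by (intro continuous_imp_measurable_torus_measure continuous_on_compose2[OF \<phi> continuous_on_torus_embedding]) auto
  have \<phi>_bound: "norm (\<phi> (torus_embedding x)) \<le> B" for x
    using B torus_embedding_in_cball[of x, folded K_def] by blast
  have "norm (h x * \<phi> (torus_embedding x)) \<le> \<bar>norm (h x) * B\<bar>" for x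
    using mult_left_mono[OF \<phi>_bound[of x] norm_ge_zero[of "h x"]] abs_ge_self[of "norm (h x) * B"]
    unfolding norm_mult by linarith
  then show ?thesis
    by (intro Bochner_Integration.integrable_bound[OF integrable_norm[OF h, THEN integrable_mult_left, of B]])
       (auto intro!: AE_I2)
qed

lemma integral_mult_continuous_embedding_eq_0:
  fixes \<phi> :: "complex^'n::finite \<Rightarrow> complex"
  assumes h: "integrable torus_measure h" and h_coeff: "\<And>k. fourier_coeff k h = 0"
    and \<phi>: "continuous_on UNIV \<phi>"
  shows "(LINT x|torus_measure. h x * \<phi> (torus_embedding x)) = 0"
proof -
  define K where "K = cball (0 :: complex^'n) CARD('n)"
  note int = integrable_mult_continuous_embedding[OF h \<phi>]
  define N where "N = (LINT x|torus_measure. norm (h x))"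
  have "N \<ge> 0" unfolding N_def by simp
  have "norm (LINT x|torus_measure. h x * \<phi> (torus_embedding x)) \<le> 0 + e" if "e > 0" for e
  proof -
    obtain g where g: "polynomial_function g" "\<And>z. z \<in> K \<Longrightarrow> norm (\<phi> z - g z) < e / (N + 1)"
      using Stone_Weierstrass_polynomial_function[of K \<phi> "e / (N + 1)"] continuous_on_subset[OF \<phi>]
        \<open>e > 0\<close> \<open>N \<ge> 0\<close> by (auto simp: K_def)
    have g_orth: "integrable torus_measure (\<lambda>x. h x * g (torus_embedding x))"
        "(LINT x|torus_measure. h x * g (torus_embedding x)) = 0"
      using integral_mult_trig_poly_eq_0[OF h h_coeff trig_poly_polynomial[OF g(1)]] by auto
    have bound: "norm (h x * (\<phi> (torus_embedding x) - g (torus_embedding x))) \<le> e / (N + 1) * norm (h x)" for x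
      using mult_left_mono[OF less_imp_le[OF g(2)[OF torus_embedding_in_cball[of x, folded K_def]]] norm_ge_zero[of "h x"]]
      by (simp add: norm_mult mult_ac)
    have "norm (LINT x|torus_measure. h x * \<phi> (torus_embedding x))
        = norm (LINT x|torus_measure. h x * (\<phi> (torus_embedding x) - g (torus_embedding x)))"
      using int g_orth by (simp add: right_diff_distrib)
    also have "\<dots> \<le> (LINT x|torus_measure. norm (h x * (\<phi> (torus_embedding x) - g (torus_embedding x))))"
      by (rule integral_norm_bound)
    also have "\<dots> \<le> (LINT x|torus_measure. e / (N + 1) * norm (h x))"
      using Bochner_Integration.integrable_diff[OF int g_orth(1)] h bound
      by (intro integral_mono integrable_norm) (simp_all add: right_diff_distrib)
    also have "\<dots> = e * (N / (N + 1))"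
      by (simp add: N_def)
    also have "\<dots> \<le> e"
      using \<open>e > 0\<close> \<open>N \<ge> 0\<close> by (intro mult_left_le) simp_all
    finally show ?thesis by simp
  qed
  then show ?thesis
    using field_le_epsilon[of "norm (LINT x|torus_measure. h x * \<phi> (torus_embedding x))" 0] by simp
qed

lemma in_arc_iff_cos_less:
  fixes x a b :: real
  assumes x: "0 \<le> x" "x < 1" and ab: "0 \<le> a" "a < b" "b \<le> 1"
  shows "a < x \<and> x < b \<longleftrightarrow> cos (2 * pi * ((b - a) / 2)) < cos (2 * pi * (x - (a + b) / 2))"
proof -
  define r where "r = (b - a) / 2"
  define t where "t = x - (a + b) / 2"
  have r: "0 < r" "r \<le> 1/2" using ab by (auto simp: r_def)
  have cos_abs: "cos (2 * pi * t) = cos (2 * pi * \<bar>t\<bar>)"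
    by (metis cos_abs_real abs_mult abs_of_nonneg pi_ge_zero mult_nonneg_nonneg zero_le_numeral)
  have iff: "a < x \<and> x < b \<longleftrightarrow> \<bar>t\<bar> < r"
    unfolding t_def r_def abs_less_iff by (auto simp: field_simps)
  have "cos (2 * pi * r) < cos (2 * pi * \<bar>t\<bar>)" if "\<bar>t\<bar> < r"
    using r that by (intro cos_monotone_0_pi) auto
  moreover have "cos (2 * pi * \<bar>t\<bar>) \<le> cos (2 * pi * r)" if "r \<le> \<bar>t\<bar>"
  proof (cases "\<bar>t\<bar> \<le> 1/2")
    case True
    then show ?thesis using r that by (intro cos_monotone_0_pi_le) auto
  next
    case False
    have "r \<le> 1 - \<bar>t\<bar>"
      using False x ab by (auto simp: t_def r_def abs_if field_simps split: if_splits; linarith)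
    then have "cos (2 * pi * (1 - \<bar>t\<bar>)) \<le> cos (2 * pi * r)"
      using r False by (intro cos_monotone_0_pi_le) auto
    moreover have "cos (2 * pi * (1 - \<bar>t\<bar>)) = cos (2 * pi * \<bar>t\<bar>)"
      using cos_2pi_minus[of "2 * pi * \<bar>t\<bar>"] by (simp add: algebra_simps)
    ultimately show ?thesis by simp
  qed
  ultimately show ?thesis
    unfolding iff cos_abs[symmetric] r_def[symmetric] t_def[symmetric] by force
qed

(* A box in the torus is a product of arcs, i.e. of superlevel sets of cos (2 pi (x_i - c_i)), a
   continuous function of torus_embedding x; this is how Stone-Weierstrass reaches indicators of boxes. *)
definition arc_set :: "real^'n::finite \<Rightarrow> real^'n \<Rightarrow> (real^'n) set" where
  "arc_set c r = {x. \<forall>i. cos (2 * pi * r$i) < cos (2 * pi * (x$i - c$i))}"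

lemma arc_set_in_borel: "arc_set c r \<in> sets borel"
proof -
  have "open (\<Inter>i\<in>UNIV. {x. cos (2 * pi * r$i) < cos (2 * pi * (x$i - c$i))})"
    by (intro open_INT ballI open_Collect_less continuous_intros) auto
  moreover have "arc_set c r = (\<Inter>i\<in>UNIV. {x. cos (2 * pi * r$i) < cos (2 * pi * (x$i - c$i))})"
    by (auto simp: arc_set_def)
  ultimately show ?thesis by simp
qed

definition unit_clamp :: "real \<Rightarrow> real" where
  "unit_clamp t = max 0 (min 1 t)"

lemma continuous_on_unit_clamp: "continuous_on UNIV unit_clamp"
  unfolding unit_clamp_def by (intro continuous_intros)

lemma unit_clamp_bounds: "0 \<le> unit_clamp t" "unit_clamp t \<le> 1"
  by (auto simp: unit_clamp_def)

lemma unit_clamp_tendsto: "(\<lambda>n. unit_clamp (real n * t)) \<longlonglongrightarrow> (if t > 0 then 1 else 0)"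
proof (cases "t > 0")
  case True
  have "eventually (\<lambda>n. unit_clamp (real n * t) = 1) sequentially"
  proof (rule eventually_sequentiallyI[of "nat \<lceil>1/t\<rceil>"])
    fix n assume "nat \<lceil>1/t\<rceil> \<le> n"
    then have "1 \<le> real n * t"
      using True by (simp add: field_simps)
    then show "unit_clamp (real n * t) = 1" by (simp add: unit_clamp_def)
  qed
  then show ?thesis using True by (simp add: tendsto_eventually)
next
  case False
  have "unit_clamp (real n * t) = 0" for n
  proof -
    have "real n * t \<le> 0"
      using False by (simp add: mult_nonneg_nonpos)
    then show ?thesis by (simp add: unit_clamp_def)
  qed
  then show ?thesis using False by simp
qed

definition arc_cutoff :: "real^'n::finite \<Rightarrow> real^'n \<Rightarrow> nat \<Rightarrow> complex^'n \<Rightarrow> real" where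
  "arc_cutoff c r n z =
     (\<Prod>i\<in>UNIV. unit_clamp (real n * (Re (z$i * cis (- (2 * pi * c$i))) - cos (2 * pi * r$i))))"

lemma continuous_on_arc_cutoff: "continuous_on UNIV (\<lambda>z. complex_of_real (arc_cutoff c r n z))"
  unfolding arc_cutoff_def
  by (intro continuous_intros continuous_on_compose2[OF continuous_on_unit_clamp]) auto

lemma arc_cutoff_torus_embedding:
  "arc_cutoff c r n (torus_embedding x)
    = (\<Prod>i\<in>UNIV. unit_clamp (real n * (cos (2 * pi * (x$i - c$i)) - cos (2 * pi * r$i))))"
  unfolding arc_cutoff_def torus_embedding_def by (simp add: cis_mult right_diff_distrib)

lemma arc_cutoff_torus_embedding_bounds:
  "0 \<le> arc_cutoff c r n (torus_embedding x)" "arc_cutoff c r n (torus_embedding x) \<le> 1"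
  unfolding arc_cutoff_torus_embedding by (auto intro!: prod_nonneg prod_le_1 simp: unit_clamp_bounds)

lemma arc_cutoff_tendsto_indicator:
  "(\<lambda>n. arc_cutoff c r n (torus_embedding x)) \<longlonglongrightarrow> indicator (arc_set c r) x"
proof -
  have "(\<lambda>n. arc_cutoff c r n (torus_embedding x))
      \<longlonglongrightarrow> (\<Prod>i\<in>UNIV. if cos (2 * pi * (x$i - c$i)) - cos (2 * pi * r$i) > 0 then 1 else 0)"
    unfolding arc_cutoff_torus_embedding by (intro tendsto_prod unit_clamp_tendsto)
  also have "(\<Prod>i\<in>UNIV. if cos (2 * pi * (x$i - c$i)) - cos (2 * pi * r$i) > 0 then 1 else 0)
      = (indicator (arc_set c r) x :: real)"
  proof (cases "x \<in> arc_set c r")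
    case False
    then obtain i where "\<not> cos (2 * pi * r$i) < cos (2 * pi * (x$i - c$i))"
      by (auto simp: arc_set_def)
    then have "(\<Prod>i\<in>UNIV. if cos (2 * pi * (x$i - c$i)) - cos (2 * pi * r$i) > 0 then 1 else 0) = (0::real)"
      by (intro prod_zero) auto
    with False show ?thesis
      by simp
  qed (simp add: arc_set_def)
  finally show ?thesis .
qed

lemma set_integral_arc_set_eq_0:
  assumes h: "integrable torus_measure h" and h_coeff: "\<And>k. fourier_coeff k h = 0"
  shows "(LINT x:arc_set c r|torus_measure. h x) = 0"
proof -
  have [measurable]: "h \<in> borel_measurable torus_measure"
    using h by auto
  have [measurable]: "(\<lambda>x. indicator (arc_set c r) x :: real) \<in> borel_measurable torus_measure"
    by (intro borel_measurable_torus_measureI borel_measurable_indicator arc_set_in_borel)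
  have "continuous_on UNIV (\<lambda>x. arc_cutoff c r n (torus_embedding x))" for n
    unfolding arc_cutoff_torus_embedding
    by (intro continuous_intros continuous_on_compose2[OF continuous_on_unit_clamp]) auto
  then have [measurable]: "(\<lambda>x. arc_cutoff c r n (torus_embedding x)) \<in> borel_measurable torus_measure" for n
    by (rule continuous_imp_measurable_torus_measure)
  have "(\<lambda>n. LINT x|torus_measure. h x * arc_cutoff c r n (torus_embedding x))
      \<longlonglongrightarrow> (LINT x:arc_set c r|torus_measure. h x)"
    unfolding set_lebesgue_integral_def
  proof (rule integral_dominated_convergence[where w="\<lambda>x. norm (h x)"])
    show "AE x in torus_measure.
        (\<lambda>n. h x * arc_cutoff c r n (torus_embedding x)) \<longlonglongrightarrow> indicator (arc_set c r) x *\<^sub>R h x"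
    proof (intro AE_I2)
      fix x
      have "(\<lambda>n. h x * arc_cutoff c r n (torus_embedding x))
          \<longlonglongrightarrow> h x * complex_of_real (indicator (arc_set c r) x)"
        by (intro tendsto_mult_left tendsto_of_real arc_cutoff_tendsto_indicator)
      then show "(\<lambda>n. h x * arc_cutoff c r n (torus_embedding x)) \<longlonglongrightarrow> indicator (arc_set c r) x *\<^sub>R h x"
        by (simp add: scaleR_conv_of_real mult.commute)
    qed
    show "AE x in torus_measure. norm (h x * arc_cutoff c r n (torus_embedding x)) \<le> norm (h x)" for n
      using mult_left_le[OF arc_cutoff_torus_embedding_bounds(2) norm_ge_zero]
      by (intro AE_I2) (simp add: norm_mult abs_of_nonneg[OF arc_cutoff_torus_embedding_bounds(1)])
    show "integrable torus_measure (\<lambda>x. norm (h x))"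
      using h by auto
  qed measurable
  moreover have "(LINT x|torus_measure. h x * arc_cutoff c r n (torus_embedding x)) = 0" for n
    by (rule integral_mult_continuous_embedding_eq_0[OF h h_coeff continuous_on_arc_cutoff])
  ultimately have "(\<lambda>n. 0) \<longlonglongrightarrow> (LINT x:arc_set c r|torus_measure. h x)"
    by simp
  then show ?thesis
    by (rule LIMSEQ_unique[OF _ tendsto_const])
qed

lemma AE_torus_measure_interior:
  "AE x in torus_measure. \<forall>i. 0 < (x :: real^'n::finite)$i \<and> x$i < 1"
proof -
  have "AE x in torus_measure. \<forall>i\<in>UNIV. (x :: real^'n)$i \<noteq> 0"
  proof (rule AE_finite_allI)
    fix i :: 'n
    have "negligible {x :: real^'n. axis i 1 \<bullet> x = 0}"
      by (rule negligible_hyperplane) simp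
    then have "AE x in lebesgue. (x :: real^'n)$i \<noteq> 0"
      unfolding eventually_ae_filter_negligible by (auto simp: inner_axis')
    then show "AE x in torus_measure. (x :: real^'n)$i \<noteq> 0"
      by (rule AE_torus_measure_if_AE_lebesgue)
  qed simp
  with AE_space show ?thesis
    by eventually_elim (auto simp: torus_def less_le)
qed

lemma set_integral_box_eq_0:
  fixes a b :: "real^'n::finite"
  assumes h: "integrable torus_measure h" and h_coeff: "\<And>k. fourier_coeff k h = 0"
  shows "(LINT x:box a b|torus_measure. h x) = 0"
proof -
  have [measurable]: "h \<in> borel_measurable torus_measure"
    using h by auto
  have [measurable]: "(\<lambda>x. indicator (box u v) x :: real) \<in> borel_measurable torus_measure" for u v :: "real^'n"
    by (intro borel_measurable_torus_measureI borel_measurable_indicator) simp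
  define a' :: "real^'n" where "a' = (\<chi> i. max (a$i) 0)"
  define b' :: "real^'n" where "b' = (\<chi> i. min (b$i) 1)"
  have "AE x in torus_measure. indicator (box a b) x = (indicator (box a' b') x :: real)"
    using AE_torus_measure_interior
    by eventually_elim (auto simp: mem_box_cart a'_def b'_def split: split_indicator)
  then have "(LINT x:box a b|torus_measure. h x) = (LINT x:box a' b'|torus_measure. h x)"
    unfolding set_lebesgue_integral_def by (intro integral_cong_AE) (auto elim: eventually_mono)
  also have "\<dots> = 0"
  proof (cases "\<forall>i. a'$i < b'$i")
    case True
    define c :: "real^'n" where "c = (\<chi> i. (a'$i + b'$i) / 2)"
    define r :: "real^'n" where "r = (\<chi> i. (b'$i - a'$i) / 2)"
    have "x \<in> box a' b' \<longleftrightarrow> x \<in> arc_set c r" if "x \<in> torus" for x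
      using in_arc_iff_cos_less[of "x$i" "a'$i" "b'$i" for i] that True
      by (auto simp: torus_def c_def r_def a'_def b'_def mem_box_cart arc_set_def)
    then have "(LINT x:box a' b'|torus_measure. h x) = (LINT x:arc_set c r|torus_measure. h x)"
      unfolding set_lebesgue_integral_def
      by (intro Bochner_Integration.integral_cong refl) (simp split: split_indicator)
    then show ?thesis
      using set_integral_arc_set_eq_0[OF h h_coeff] by simp
  next
    case False
    then have "box a' b' = {}"
      by (auto simp: mem_box_cart) (meson less_trans not_less)
    then show ?thesis by (simp add: set_lebesgue_integral_def)
  qed
  finally show ?thesis .
qed

lemma Int_torus_in_sets_torus_measure: "A \<in> sets borel \<Longrightarrow> torus \<inter> A \<in> sets torus_measure"
  unfolding torus_measure_def sets_restrict_space by (intro imageI) (simp add: sets_completionI_sets)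

lemma set_integral_torus_measure_Int_torus:
  "(LINT x:A|torus_measure. h x) = (LINT x:torus \<inter> A|torus_measure. h x)"
  unfolding set_lebesgue_integral_def
  by (rule Bochner_Integration.integral_cong) (auto split: split_indicator)

lemma set_integral_space_Diff:
  fixes f :: "'a \<Rightarrow> 'b::{banach, second_countable_topology}"
  assumes "integrable M f" and "A \<in> sets M"
  shows "(LINT x:space M - A|M. f x) = (LINT x|M. f x) - (LINT x:A|M. f x)"
proof -
  have "(LINT x:space M - A|M. f x) = (LINT x|M. f x - indicator A x *\<^sub>R f x)"
    unfolding set_lebesgue_integral_def
    by (rule Bochner_Integration.integral_cong) (auto split: split_indicator)
  also have "\<dots> = (LINT x|M. f x) - (LINT x:A|M. f x)"
    using assms by (simp add: set_lebesgue_integral_def integrable_mult_indicator)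
  finally show ?thesis .
qed

lemma set_integral_borel_eq_0:
  fixes h :: "real^'n::finite \<Rightarrow> complex"
  assumes h: "integrable torus_measure h" and h_coeff: "\<And>k. fourier_coeff k h = 0"
    and "B \<in> sets borel"
  shows "(LINT x:B|torus_measure. h x) = 0"
proof -
  let ?G = "range (\<lambda>(a, b). box a b :: (real^'n) set)"
  have set_integrable: "set_integrable torus_measure (torus \<inter> A) h" if "A \<in> sets borel" for A
    unfolding set_integrable_def using Int_torus_in_sets_torus_measure[OF that] h
    by (rule integrable_mult_indicator)
  have "Int_stable ?G"
    by (auto simp: Int_stable_def box_Int_box)
  moreover have "?G \<subseteq> Pow UNIV" by simp
  moreover have "B \<in> sigma_sets UNIV ?G"
    using \<open>B \<in> sets borel\<close> by (simp add: borel_eq_box)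
  ultimately have "(LINT x:torus \<inter> B|torus_measure. h x) = 0"
  proof (induction rule: sigma_sets_induct_disjoint)
    case (basic A)
    then obtain a b where "A = box a b"
      by auto
    then show ?case
      using set_integral_box_eq_0[OF h h_coeff, of a b] set_integral_torus_measure_Int_torus[of A h] by simp
  next
    case empty
    show ?case by (simp add: set_lebesgue_integral_def)
  next
    case (compl A)
    then have "torus \<inter> A \<in> sets torus_measure"
      by (intro Int_torus_in_sets_torus_measure) (simp add: borel_eq_box)
    moreover have "torus \<inter> (UNIV - A) = space torus_measure - torus \<inter> A"
      by auto
    ultimately show ?case
      using set_integral_space_Diff[OF h] h_coeff[of 0] compl.IH by (simp add: fourier_coeff_conv_torus_char)
  next
    case (union A)
    then have A: "A i \<in> sets borel" for i by (auto simp: borel_eq_box)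
    have "(LINT x:torus \<inter> (\<Union>i. A i)|torus_measure. h x) = (LINT x:(\<Union>i. torus \<inter> A i)|torus_measure. h x)"
      by simp
    also have "\<dots> = (\<Sum>i. LINT x:torus \<inter> A i|torus_measure. h x)"
      using union.hyps(1) set_integrable[of "\<Union>i. A i"] A
      by (intro lebesgue_integral_countable_add Int_torus_in_sets_torus_measure)
         (auto simp: disjoint_family_on_def)
    also have "\<dots> = 0"
      using union.IH by simp
    finally show ?case .
  qed
  then show ?thesis
    using set_integral_torus_measure_Int_torus[of B h] by simp
qed

lemma set_integral_torus_measure_eq_0_if_borel:
  fixes h :: "real^'n::finite \<Rightarrow> complex"
  assumes h: "integrable torus_measure h"
    and borel: "\<And>B. B \<in> sets borel \<Longrightarrow> (LINT x:B|torus_measure. h x) = 0"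
    and A: "A \<in> sets torus_measure"
  shows "(LINT x:A|torus_measure. h x) = 0"
proof -
  obtain A' where A': "A' \<in> sets lebesgue" "A = torus \<inter> A'"
    using A by (auto simp: torus_measure_def sets_restrict_space)
  from A'(1) obtain S N N' where SN: "A' = S \<union> N" "N \<subseteq> N'" "N' \<in> null_sets lborel" "S \<in> sets lborel"
    by (rule sets_completionE)
  have [measurable]: "h \<in> borel_measurable torus_measure" "A \<in> sets torus_measure"
    using h A by auto
  have [measurable]: "(\<lambda>x. indicator S x :: real) \<in> borel_measurable torus_measure"
    using SN(4) by (intro borel_measurable_torus_measureI borel_measurable_indicator) simp
  have "AE x in (torus_measure :: (real^'n) measure). x \<notin> N'"
    by (rule AE_torus_measure_if_AE_lborel[OF AE_not_in[OF SN(3)]])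
  with AE_space have "AE x in torus_measure. indicator A x *\<^sub>R h x = indicator S x *\<^sub>R h x"
    by eventually_elim (use A' SN in \<open>auto split: split_indicator\<close>)
  then have "(LINT x:A|torus_measure. h x) = (LINT x:S|torus_measure. h x)"
    unfolding set_lebesgue_integral_def by (intro integral_cong_AE) measurable
  also have "\<dots> = 0"
    using SN(4) by (intro borel) simp
  finally show ?thesis .
qed

lemma AE_zero_if_fourier_coeff_eq_0:
  fixes h :: "real^'n::finite \<Rightarrow> complex"
  assumes h: "integrable torus_measure h" and h_coeff: "\<And>k. fourier_coeff k h = 0"
  shows "AE x in torus_measure. h x = 0"
proof -
  interpret finite_measure "torus_measure :: (real^'n) measure"
    by (rule finite_measure_torus_measure)
  show ?thesis
    using set_integral_torus_measure_eq_0_if_borel[OF h set_integral_borel_eq_0[OF h h_coeff]]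
    by (rule density_zero[OF h])
qed

section \<open>Projections and ANOVA terms of Fourier series\<close>

definition merge_coords :: "'n::finite set \<Rightarrow> real^'n \<Rightarrow> real^'n \<Rightarrow> real^'n" where
  "merge_coords u x y = (\<chi> i. if i \<in> u then x$i else y$i)"

definition vec_restrict :: "'n::finite set \<Rightarrow> 'a::zero^'n \<Rightarrow> 'a^'n" where
  "vec_restrict u k = (\<chi> i. if i \<in> u then k$i else 0)"

lemma P_op_conv_merge_coords: "P_op u g x = (LINT y|torus_measure. g (merge_coords u x y))"
  by (simp add: P_op_def merge_coords_def)

lemma merge_coords_in_torus: "x \<in> torus \<Longrightarrow> y \<in> torus \<Longrightarrow> merge_coords u x y \<in> torus"
  by (auto simp: torus_def merge_coords_def)

lemma torus_char_merge_coords: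
  "torus_char k (merge_coords u x y) = torus_char (vec_restrict u k) x * torus_char (vec_restrict (- u) k) y"
proof -
  have "(\<Sum>i\<in>UNIV. real_of_int (k$i) * (merge_coords u x y)$i)
      = (\<Sum>i\<in>UNIV. real_of_int ((vec_restrict u k)$i) * x$i + real_of_int ((vec_restrict (- u) k)$i) * y$i)"
    by (rule sum.cong) (auto simp: merge_coords_def vec_restrict_def)
  then show ?thesis
    unfolding torus_char_def by (simp add: cis_mult sum.distrib distrib_left)
qed

lemma measurable_torus_char_merge_coords:
  "(\<lambda>y. torus_char k (merge_coords u x y)) \<in> borel_measurable torus_measure"
  unfolding torus_char_merge_coords
  by (intro continuous_imp_measurable_torus_measure continuous_intros continuous_on_torus_char)

lemma P_op_fourier_series:
  assumes c: "(\<lambda>k. norm (c k)) summable_on UNIV"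
  shows "P_op u (fourier_series c) x = (\<Sum>\<^sub>\<infinity>k\<in>{k. \<forall>j. j \<notin> u \<longrightarrow> k$j = 0}. c k * torus_char k x)"
proof -
  have "P_op u (fourier_series c) x = (LINT y|torus_measure. (\<Sum>\<^sub>\<infinity>k. c k * torus_char k (merge_coords u x y)))"
    by (simp add: P_op_conv_merge_coords fourier_series_def)
  also have "\<dots> = (\<Sum>\<^sub>\<infinity>k. c k * (LINT y|torus_measure. torus_char k (merge_coords u x y)))"
    by (rule integral_infsum_bounded(2)[OF finite_measure_torus_measure c])
       (simp_all add: measurable_torus_char_merge_coords)
  also have "\<dots> = (\<Sum>\<^sub>\<infinity>k\<in>{k. \<forall>j. j \<notin> u \<longrightarrow> k$j = 0}. c k * torus_char k x)"
  proof -
    have "c k * (LINT y|torus_measure. torus_char k (merge_coords u x y))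
        = (if \<forall>j. j \<notin> u \<longrightarrow> k$j = 0 then c k * torus_char k x else 0)" for k
    proof -
      have "vec_restrict (- u) k = 0 \<longleftrightarrow> (\<forall>j. j \<notin> u \<longrightarrow> k$j = 0)"
        by (auto simp: vec_restrict_def vec_eq_iff)
      moreover have "(\<forall>j. j \<notin> u \<longrightarrow> k$j = 0) \<Longrightarrow> vec_restrict u k = k"
        by (auto simp: vec_restrict_def vec_eq_iff)
      ultimately show ?thesis
        by (auto simp: torus_char_merge_coords integral_torus_char)
    qed
    then show ?thesis
      by (intro infsum_cong_neutral) auto
  qed
  finally show ?thesis .
qed

declare anova.simps [simp del]

lemma anova_apply: "anova g u x = P_op u g x - (\<Sum>v\<in>{v. v \<subset> u}. anova g v x)"
  by (rule fun_cong[OF anova.simps])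

lemma anova_fourier_series:
  assumes c: "(\<lambda>k. norm (c k)) summable_on UNIV"
  shows "anova (fourier_series c) u x = (\<Sum>\<^sub>\<infinity>k\<in>freq_F u. c k * torus_char k x)"
proof (induction u rule: finite_psubset_induct[OF finite])
  case (1 u)
  let ?a = "\<lambda>k. c k * torus_char k x"
  have "{k. \<forall>j. j \<notin> u \<longrightarrow> k$j = 0} = (\<Union>v\<in>Pow u. freq_F v)"
    by (auto simp: freq_F_def)
  then have "P_op u (fourier_series c) x = (\<Sum>v\<in>Pow u. \<Sum>\<^sub>\<infinity>k\<in>freq_F v. ?a k)"
    unfolding P_op_fourier_series[OF c]
    by (simp only:) (rule sum_infsum[symmetric],
        auto simp: freq_F_def abs_summable_summable[OF abs_summable_mult_torus_char[OF c]])
  also have "\<dots> = (\<Sum>\<^sub>\<infinity>k\<in>freq_F u. ?a k) + (\<Sum>v\<in>{v. v \<subset> u}. \<Sum>\<^sub>\<infinity>k\<in>freq_F v. ?a k)"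
    by (subst Pow_def, subst sum.remove[of _ u]) (auto intro!: sum.cong)
  also have "(\<Sum>v\<in>{v. v \<subset> u}. \<Sum>\<^sub>\<infinity>k\<in>freq_F v. ?a k) = (\<Sum>v\<in>{v. v \<subset> u}. anova (fourier_series c) v x)"
    using "1.IH" by simp
  finally show ?case
    by (subst anova_apply) simp
qed

lemma emeasure_lborel_box_cart:
  "emeasure lborel (box a b :: (real^'n::finite) set) = ennreal (\<Prod>i\<in>UNIV. max 0 (b$i - a$i))"
proof (cases "\<forall>i. a$i \<le> b$i")
  case True
  then have "emeasure lborel (box a b) = ennreal (\<Prod>bb\<in>Basis. (b - a) \<bullet> bb)"
    by (subst emeasure_lborel_box_eq) (auto simp: Basis_vec_def inner_axis)
  also have "(\<Prod>bb\<in>Basis. (b - a) \<bullet> bb) = (\<Prod>i\<in>UNIV. max 0 (b$i - a$i))"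
    using True by (simp add: prod_Basis_cart inner_axis)
  finally show ?thesis .
next
  case False
  then obtain i where i: "b$i < a$i" by (auto simp: not_le)
  then have "box a b = {}"
    by (auto simp: mem_box_cart) (meson less_trans not_less_iff_gr_or_eq)
  moreover have "(\<Prod>i\<in>UNIV. max 0 (b$i - a$i)) = 0"
  proof (rule prod_zero)
    show "\<exists>j\<in>UNIV. max 0 (b$j - a$j) = 0"
      using i by (intro bexI[of _ i]) auto
  qed simp
  ultimately show ?thesis
    by (metis emeasure_empty ennreal_0)
qed

lemma box_Pair_eq: "box (a, c) (b, d) = box a b \<times> box c d"
  by (auto simp: box_def Basis_prod_def ball_Un)

lemma emeasure_lborel_box_prod_cart:
  fixes a b c d :: "real^'n::finite"
  shows "emeasure lborel (box (a, c) (b, d))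
    = ennreal ((\<Prod>i\<in>UNIV. max 0 (b$i - a$i)) * (\<Prod>i\<in>UNIV. max 0 (d$i - c$i)))"
proof -
  have "emeasure lborel (box (a, c) (b, d)) = emeasure (lborel \<Otimes>\<^sub>M lborel) (box a b \<times> box c d)"
    by (simp add: box_Pair_eq lborel_prod)
  also have "\<dots> = emeasure lborel (box a b) * emeasure lborel (box c d)"
    by (intro lborel.emeasure_pair_measure_Times) auto
  also have "\<dots> = ennreal ((\<Prod>i\<in>UNIV. max 0 (b$i - a$i)) * (\<Prod>i\<in>UNIV. max 0 (d$i - c$i)))"
    by (simp add: emeasure_lborel_box_cart ennreal_mult prod_nonneg)
  finally show ?thesis .
qed

definition swap_coords :: "'n::finite set \<Rightarrow> (real^'n) \<times> (real^'n) \<Rightarrow> (real^'n) \<times> (real^'n)" where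
  "swap_coords u p = (merge_coords u (fst p) (snd p), merge_coords u (snd p) (fst p))"

lemma swap_coords_measurable: "swap_coords (u :: 'n::finite set) \<in> borel_measurable borel"
proof -
  have merge: "continuous_on UNIV (\<lambda>p. merge_coords u (f p) (g p))"
    if "continuous_on UNIV f" "continuous_on UNIV g" for f g :: "(real^'n) \<times> (real^'n) \<Rightarrow> real^'n"
    unfolding merge_coords_def
  proof (intro continuous_on_vec_lambda)
    show "continuous_on UNIV (\<lambda>p. if i \<in> u then f p $ i else g p $ i)" for i
      by (cases "i \<in> u") (auto intro!: continuous_intros that)
  qed
  show ?thesis
    unfolding swap_coords_def
    by (intro borel_measurable_continuous_onI continuous_on_Pair merge continuous_intros)
qed

lemma distr_lborel_swap_coords: "distr lborel borel (swap_coords u :: (real^'n::finite) \<times> (real^'n) \<Rightarrow> _) = lborel"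
proof (rule lborel_eqI[symmetric])
  fix l w :: "(real^'n) \<times> (real^'n)"
  assume le: "\<And>b. b \<in> Basis \<Longrightarrow> l \<bullet> b \<le> w \<bullet> b"
  obtain a c b d where lw: "l = (a, c)" "w = (b, d)"
    by (cases l, cases w)
  have preimage: "swap_coords u -` box (a, c) (b, d)
      = box (merge_coords u a c, merge_coords u c a) (merge_coords u b d, merge_coords u d b)"
    by (auto simp: box_Pair_eq swap_coords_def mem_box_cart merge_coords_def split: if_splits)
  have "(\<Prod>i\<in>UNIV. max 0 ((merge_coords u b d)$i - (merge_coords u a c)$i))
      * (\<Prod>i\<in>UNIV. max 0 ((merge_coords u d b)$i - (merge_coords u c a)$i))
      = (\<Prod>i\<in>UNIV. max 0 (b$i - a$i)) * (\<Prod>i\<in>UNIV. max 0 (d$i - c$i))"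
    unfolding prod.distrib[symmetric] by (intro prod.cong refl) (auto simp: merge_coords_def)
  then have "emeasure (distr lborel borel (swap_coords u)) (box l w) = emeasure lborel (box l w)"
    by (subst emeasure_distr) (simp_all add: swap_coords_measurable lw preimage emeasure_lborel_box_prod_cart)
  also have "\<dots> = (\<Prod>b\<in>Basis. (w - l) \<bullet> b)"
    using le by (intro emeasure_lborel_box) auto
  finally show "emeasure (distr lborel borel (swap_coords u)) (box l w) = (\<Prod>b\<in>Basis. (w - l) \<bullet> b)" .
qed simp

lemma AE_merge_coords:
  fixes Q :: "real^'n::finite \<Rightarrow> bool"
  assumes "AE z in lborel. Q z"
  shows "AE x in lborel. AE y in lborel. Q (merge_coords u x y)"
proof -
  from assms obtain N where N: "{z \<in> space lborel. \<not> Q z} \<subseteq> N" "emeasure lborel N = 0" "N \<in> sets lborel"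
    by (rule AE_E)
  have null: "N \<in> null_sets lborel"
    using N(2,3) by auto
  have [measurable]: "N \<in> sets lborel"
    by (rule N(3))
  have "AE x in lborel. AE y in lborel. fst (x, y :: real^'n) \<notin> N"
    using AE_not_in[OF null] by (auto elim!: eventually_mono)
  then have "AE p in lborel \<Otimes>\<^sub>M (lborel :: (real^'n) measure). fst p \<notin> N"
    by (rule lborel_pair.AE_pair_measure[rotated]) measurable
  then have "AE p in distr lborel borel (swap_coords u). fst p \<notin> N"
    by (simp only: lborel_prod distr_lborel_swap_coords)
  then have "AE p in lborel. fst (swap_coords u p) \<notin> N"
    by (rule AE_distrD[rotated]) (simp add: swap_coords_measurable)
  then have "AE x in lborel. AE y in lborel. fst (swap_coords u (x, y)) \<notin> N"
    by (intro lborel_pair.AE_pair) (simp only: lborel_prod)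
  then show ?thesis
    using N(1) by (auto simp: swap_coords_def elim!: eventually_mono)
qed

lemma borel_measurable_torus_measure_AE:
  fixes g h :: "real^'n::finite \<Rightarrow> complex"
  assumes "g \<in> borel_measurable torus_measure" and ae: "AE x in torus_measure. g x = h x"
  shows "h \<in> borel_measurable torus_measure"
proof -
  have "(\<lambda>x. if x \<in> torus then g x else 0) \<in> borel_measurable lebesgue"
    using assms(1) unfolding torus_measure_def by (rule borel_measurable_if_I) (rule torus_in_lebesgue)
  moreover have "AE x in lebesgue. (if x \<in> torus then g x else 0) = (if x \<in> torus then h x else 0)"
    using ae unfolding torus_measure_def
    by (subst (asm) AE_restrict_space_iff) (auto simp: torus_in_lebesgue elim: eventually_mono)
  ultimately have "(\<lambda>x. if x \<in> torus then h x else 0) \<in> borel_measurable lebesgue"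
    by (rule borel_measurable_AE)
  then show ?thesis
    unfolding torus_measure_def by (rule borel_measurable_if_D)
qed

lemma P_op_AE_cong:
  fixes f g :: "real^'n::finite \<Rightarrow> complex"
  assumes ae: "AE x in torus_measure. f x = g x"
    and g_meas: "\<And>x. (\<lambda>y. g (merge_coords u x y)) \<in> borel_measurable torus_measure"
  shows "AE x in torus_measure. P_op u f x = P_op u g x"
proof -
  have "AE x in lborel. AE y in lborel.
      merge_coords u x y \<in> torus \<longrightarrow> f (merge_coords u x y) = g (merge_coords u x y)"
    using AE_lborel_if_AE_torus_measure[OF ae] by (rule AE_merge_coords)
  then have "AE x in torus_measure. AE y in torus_measure.
      merge_coords u x y \<in> torus \<longrightarrow> f (merge_coords u x y) = g (merge_coords u x y)"
    by (intro AE_torus_measure_if_AE_lborel) (auto elim!: eventually_mono intro: AE_torus_measure_if_AE_lborel)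
  with AE_space show ?thesis
  proof eventually_elim
    case (elim x)
    have "AE y in torus_measure. g (merge_coords u x y) = f (merge_coords u x y)"
      using elim(2) AE_space by eventually_elim (use elim(1) merge_coords_in_torus in auto)
    moreover from this have "(\<lambda>y. f (merge_coords u x y)) \<in> borel_measurable torus_measure"
      by (rule borel_measurable_torus_measure_AE[OF g_meas])
    ultimately show ?case
      unfolding P_op_conv_merge_coords
      by (intro integral_cong_AE g_meas) (auto elim: eventually_mono)
  qed
qed

lemma fourier_coeff_diff:
  assumes f: "integrable torus_measure f" and g: "integrable torus_measure g"
  shows "fourier_coeff k (\<lambda>x. f x - g x) = fourier_coeff k f - fourier_coeff k g"
proof -
  have [measurable]: "torus_char (- k) \<in> borel_measurable torus_measure"
    by (rule continuous_imp_measurable_torus_measure[OF continuous_on_torus_char])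
  have int: "integrable torus_measure (\<lambda>x. h x * torus_char (- k) x)" if h: "integrable torus_measure h" for h
  proof -
    have [measurable]: "h \<in> borel_measurable torus_measure"
      using h by auto
    show ?thesis
      by (rule Bochner_Integration.integrable_bound[OF h]) (auto simp: norm_mult)
  qed
  show ?thesis
    unfolding fourier_coeff_conv_torus_char
    using Bochner_Integration.integral_diff[OF int[OF f] int[OF g]] by (simp add: left_diff_distrib)
qed

lemma AE_eq_fourier_series:
  fixes f :: "real^'n::finite \<Rightarrow> complex" and c :: "int^'n \<Rightarrow> complex"
  assumes f: "integrable torus_measure f" and c: "(\<lambda>k. norm (c k)) summable_on UNIV"
    and f_coeff: "\<And>k. fourier_coeff k f = c k"
  shows "AE x in torus_measure. f x = fourier_series c x
    \<and> (\<forall>u. anova f u x = (\<Sum>\<^sub>\<infinity>k\<in>freq_F u. c k * torus_char k x))"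
proof -
  have "AE x in torus_measure. f x - fourier_series c x = 0"
    using f integrable_fourier_series[OF c] fourier_coeff_fourier_series[OF c]
    by (intro AE_zero_if_fourier_coeff_eq_0) (simp_all add: fourier_coeff_diff f_coeff)
  then have f_eq: "AE x in torus_measure. f x = fourier_series c x"
    by (auto elim: eventually_mono)
  have slice_meas: "(\<lambda>y. fourier_series c (merge_coords u x y)) \<in> borel_measurable torus_measure" for u x
    using integral_infsum_bounded(1)[OF finite_measure_torus_measure c, of "\<lambda>k y. torus_char k (merge_coords u x y)"]
    by (auto simp: fourier_series_def measurable_torus_char_merge_coords)
  have "AE x in torus_measure. \<forall>u\<in>UNIV. P_op u f x = P_op u (fourier_series c) x"
    by (intro AE_finite_allI P_op_AE_cong[OF f_eq] slice_meas) simp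
  with f_eq show ?thesis
  proof eventually_elim
    case (elim x)
    have "anova f u x = anova (fourier_series c) u x" for u
    proof (induction u rule: finite_psubset_induct[OF finite])
      case (1 u)
      then show ?case
        using elim(2) by (subst (1 2) anova_apply) simp
    qed
    then show ?case
      using elim(1) anova_fourier_series[OF c] by simp
  qed
qed

section \<open>The truncation estimate\<close>

lemma Linf_norm_le_add:
  fixes g h :: "real^'n::finite \<Rightarrow> complex"
  assumes [measurable]: "g \<in> borel_measurable torus_measure" "h \<in> borel_measurable torus_measure"
    and bounded: "AE x in torus_measure. norm (g x) \<le> K"
    and le: "AE x in torus_measure. norm (h x) \<le> norm (g x) + B" and "0 \<le> B"
  shows "Linf_norm h \<le> Linf_norm g + B"
proof -
  let ?M = "torus_measure :: (real^'n) measure"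
  let ?ess = "\<lambda>g. esssup ?M (\<lambda>x. ereal (norm (g x)))"
  have nonneg: "0 \<le> ?ess g" if [measurable]: "g \<in> borel_measurable ?M" for g
  proof -
    have "emeasure ?M (space ?M) \<noteq> 0"
      by (simp add: emeasure_torus_measure)
    then have "esssup ?M (\<lambda>x. 0::ereal) = 0"
      by (rule esssup_const)
    moreover have "esssup ?M (\<lambda>x. 0::ereal) \<le> ?ess g"
      by (rule esssup_mono) auto
    ultimately show ?thesis by simp
  qed
  have "?ess g \<le> ereal K"
    using bounded by (intro esssup_I) (auto elim: eventually_mono)
  with nonneg[OF assms(1)] obtain l where l: "?ess g = ereal l"
    by (cases "?ess g") auto
  have "AE x in ?M. ereal (norm (h x)) \<le> ?ess g + ereal B"
    using le esssup_AE[of "\<lambda>x. ereal (norm (g x))" ?M]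
    by eventually_elim (simp add: l)
  then have "?ess h \<le> ?ess g + ereal B"
    by (intro esssup_I) auto
  then have "real_of_ereal (?ess h) \<le> real_of_ereal (?ess g + ereal B)"
    by (rule real_of_ereal_positive_mono[OF nonneg[OF assms(2)]]) (simp add: l)
  then show ?thesis
    by (simp add: Linf_norm_def l)
qed

lemma
  fixes w :: "int^'n::finite \<Rightarrow> real"
  assumes w: "\<And>k. 1 \<le> w k" and f: "in_A w f"
  shows abs_summable_fourier_coeff: "(\<lambda>k. norm (fourier_coeff k f)) summable_on UNIV"
    and infsum_norm_fourier_coeff_le_A_norm: "(\<Sum>\<^sub>\<infinity>k. norm (fourier_coeff k f)) \<le> A_norm w f"
proof -
  have weighted: "(\<lambda>k. w k * norm (fourier_coeff k f)) summable_on UNIV"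
    using f by (simp add: in_A_def)
  have le: "norm (fourier_coeff k f) \<le> w k * norm (fourier_coeff k f)" for k
    using w[of k] by (simp add: mult_le_cancel_right1)
  show summable: "(\<lambda>k. norm (fourier_coeff k f)) summable_on UNIV"
    using Infinite_Sum.abs_summable_on_comparison_test'[OF weighted, of "\<lambda>k. norm (fourier_coeff k f)"] le
    by simp
  show "(\<Sum>\<^sub>\<infinity>k. norm (fourier_coeff k f)) \<le> A_norm w f"
    unfolding A_norm_def using summable weighted le by (rule infsum_mono)
qed

context
  fixes f :: "real^'n::finite \<Rightarrow> complex" and c :: "int^'n \<Rightarrow> complex"
  assumes f: "integrable torus_measure f" and c: "(\<lambda>k. norm (c k)) summable_on UNIV"
    and f_coeff: "\<And>k. fourier_coeff k f = c k"
begin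

lemma borel_measurable_anova: "anova f u \<in> borel_measurable torus_measure"
proof (rule borel_measurable_torus_measure_AE)
  let ?c = "\<lambda>k. if k \<in> freq_F u then c k else 0"
  have "(\<lambda>k. norm (?c k)) summable_on UNIV"
    by (rule Infinite_Sum.abs_summable_on_comparison_test'[OF c]) auto
  then show "fourier_series ?c \<in> borel_measurable torus_measure"
    by (intro borel_measurable_integrable integrable_fourier_series)
  have "fourier_series ?c x = (\<Sum>\<^sub>\<infinity>k\<in>freq_F u. c k * torus_char k x)" for x
    unfolding fourier_series_def by (rule infsum_cong_neutral) auto
  then show "AE x in torus_measure. fourier_series ?c x = anova f u x"
    using AE_eq_fourier_series[OF f c f_coeff] by (auto elim: eventually_mono)
qed

lemma AE_norm_anova_le: "AE x in torus_measure.
    norm (f x) \<le> (\<Sum>\<^sub>\<infinity>k. norm (c k)) \<and> (\<forall>u. norm (anova f u x) \<le> (\<Sum>\<^sub>\<infinity>k\<in>freq_F u. norm (c k)))"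
  using AE_eq_fourier_series[OF f c f_coeff]
proof eventually_elim
  case (elim x)
  then show ?case
    using norm_infsum_mult_torus_char_le[OF c] by (simp add: fourier_series_def)
qed

lemma borel_measurable_sub_anova_trunc:
  "(\<lambda>x. f x - anova_trunc U f x) \<in> borel_measurable torus_measure"
  using f borel_measurable_anova unfolding anova_trunc_def
  by (intro borel_measurable_diff borel_measurable_sum) auto

lemma Linf_norm_sub_anova_trunc_le:
  assumes "U \<subseteq> U'"
  shows "Linf_norm (\<lambda>x. f x - anova_trunc U f x)
    \<le> Linf_norm (\<lambda>x. f x - anova_trunc U' f x) + (\<Sum>u\<in>U' - U. \<Sum>\<^sub>\<infinity>k\<in>freq_F u. norm (c k))"
proof (rule Linf_norm_le_add[OF borel_measurable_sub_anova_trunc borel_measurable_sub_anova_trunc])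
  let ?C = "\<lambda>u. \<Sum>\<^sub>\<infinity>k\<in>freq_F u. norm (c k)"
  show "0 \<le> sum ?C (U' - U)"
    by (intro sum_nonneg infsum_nonneg) simp
  show "AE x in torus_measure. norm (f x - anova_trunc U' f x) \<le> (\<Sum>\<^sub>\<infinity>k. norm (c k)) + sum ?C U'"
    using AE_norm_anova_le
  proof eventually_elim
    case (elim x)
    then have "norm (anova_trunc U' f x) \<le> sum ?C U'"
      unfolding anova_trunc_def by (intro sum_norm_le) auto
    then show ?case
      using elim norm_triangle_ineq4[of "f x" "anova_trunc U' f x"] by linarith
  qed
  have trunc_split: "anova_trunc U' f x = anova_trunc U f x + (\<Sum>u\<in>U' - U. anova f u x)" for x
    unfolding anova_trunc_def using sum.subset_diff[OF assms finite] by (simp add: add.commute)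
  show "AE x in torus_measure. norm (f x - anova_trunc U f x)
      \<le> norm (f x - anova_trunc U' f x) + sum ?C (U' - U)"
    using AE_norm_anova_le
  proof eventually_elim
    case (elim x)
    then have "norm (\<Sum>u\<in>U' - U. anova f u x) \<le> sum ?C (U' - U)"
      by (intro sum_norm_le) auto
    then show ?case
      using norm_triangle_ineq[of "f x - anova_trunc U' f x" "\<Sum>u\<in>U' - U. anova f u x"]
      by (simp add: trunc_split algebra_simps)
  qed
qed

end

lemma sum_infsum_freq_F_le:
  assumes "(\<lambda>k. norm (c k)) summable_on UNIV"
  shows "(\<Sum>u\<in>V. \<Sum>\<^sub>\<infinity>k\<in>freq_F u. norm (c k)) \<le> (\<Sum>\<^sub>\<infinity>k. norm (c k))"
proof -
  have "(\<Sum>u\<in>V. \<Sum>\<^sub>\<infinity>k\<in>freq_F u. norm (c k)) = (\<Sum>\<^sub>\<infinity>k\<in>(\<Union>u\<in>V. freq_F u). norm (c k))"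
    using summable_on_subset_banach[OF assms]
    by (intro sum_infsum) (auto simp: freq_F_def disjoint_family_on_def)
  also have "\<dots> \<le> (\<Sum>\<^sub>\<infinity>k. norm (c k))"
    using summable_on_subset_banach[OF assms] by (intro infsum_mono_neutral) auto
  finally show ?thesis .
qed

lemma le_mult_if_divide_less:
  fixes x y e :: real
  assumes "0 \<le> x" "x \<le> y" "x / y < e"
  shows "x \<le> e * y"
  using assms by (cases "y = 0") (simp_all add: divide_less_eq)

lemma sum_infsum_freq_F_le_card_mult:
  assumes c: "(\<lambda>k. norm (c k)) summable_on UNIV"
    and ratio: "\<And>u. u \<in> V \<Longrightarrow> (\<Sum>\<^sub>\<infinity>k\<in>freq_F u. norm (c k)) / (\<Sum>\<^sub>\<infinity>k. norm (c k)) < \<epsilon>"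
  shows "(\<Sum>u\<in>V. \<Sum>\<^sub>\<infinity>k\<in>freq_F u. norm (c k)) \<le> real (card V) * \<epsilon> * (\<Sum>\<^sub>\<infinity>k. norm (c k))"
proof -
  have "(\<Sum>\<^sub>\<infinity>k\<in>freq_F u. norm (c k)) \<le> \<epsilon> * (\<Sum>\<^sub>\<infinity>k. norm (c k))" if "u \<in> V" for u
    using ratio[OF that] sum_infsum_freq_F_le[OF c, of "{u}"]
    by (intro le_mult_if_divide_less) (simp_all add: infsum_nonneg)
  then have "(\<Sum>u\<in>V. \<Sum>\<^sub>\<infinity>k\<in>freq_F u. norm (c k)) \<le> (\<Sum>u\<in>V. \<epsilon> * (\<Sum>\<^sub>\<infinity>k. norm (c k)))"
    by (rule sum_mono)
  then show ?thesis
    by (simp add: mult.assoc)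
qed

lemma divide_le_sqrt:
  fixes b a t :: real
  assumes "0 \<le> b" "b \<le> a" "b \<le> t * a" "0 \<le> t"
  shows "b / a \<le> sqrt t"
proof (cases "t \<le> 1")
  case True
  have "b / a \<le> t"
    using assms by (cases "a = 0") (simp_all add: divide_le_eq)
  also have "t \<le> sqrt t"
    using True \<open>0 \<le> t\<close> by (intro real_le_rsqrt) (simp add: power2_eq_square mult_left_le)
  finally show ?thesis .
next
  case False
  then have "b / a \<le> 1"
    using assms by (cases "a = 0") (auto simp: divide_le_eq_1)
  also have "1 \<le> sqrt t"
    using False by simp
  finally show ?thesis .
qed

theorem theorem6p2:
  fixes w :: "int^'n::finite \<Rightarrow> real"
    and f :: "real^'n \<Rightarrow> complex"
    and ds :: nat and U :: "'n set set" and \<epsilon>1 \<epsilon>2 :: real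
  assumes ds: "1 \<le> ds" "ds \<le> CARD('n)"
    and w: "\<And>k. 1 \<le> w k"
    and f: "in_A w f"
    and U: "anova_subset U" "U \<subseteq> U_ds ds"
    and e1: "\<epsilon>1 > 0"
    and h1: "\<And>u. u \<in> U_ds ds - U \<Longrightarrow>
       (\<Sum>\<^sub>\<infinity>k\<in>freq_F u. cmod (fourier_coeff k f)) / (\<Sum>\<^sub>\<infinity>k. cmod (fourier_coeff k f)) < \<epsilon>1"
    and e2: "\<epsilon>2 > 0"
    and h2: "Linf_norm (\<lambda>x. f x - anova_trunc (U_ds ds) f x) / A_norm w f < \<epsilon>2"
  shows "Linf_norm (\<lambda>x. f x - anova_trunc U f x) / A_norm w f
           \<le> \<epsilon>2 + sqrt (real (card (U_ds ds - U)) * \<epsilon>1)"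
proof -
  define c where "c k = fourier_coeff k f" for k
  define B where "B = (\<Sum>u\<in>U_ds ds - U. \<Sum>\<^sub>\<infinity>k\<in>freq_F u. norm (c k))"
  let ?S = "\<Sum>\<^sub>\<infinity>k. norm (c k)"
  have c: "(\<lambda>k. norm (c k)) summable_on UNIV"
    unfolding c_def using w f by (rule abs_summable_fourier_coeff)
  have S_le: "?S \<le> A_norm w f"
    unfolding c_def using w f by (rule infsum_norm_fourier_coeff_le_A_norm)
  have B_nonneg: "0 \<le> B"
    unfolding B_def by (intro sum_nonneg infsum_nonneg) simp
  have B_le_S: "B \<le> ?S"
    unfolding B_def by (rule sum_infsum_freq_F_le[OF c])
  have B_le_card: "B \<le> real (card (U_ds ds - U)) * \<epsilon>1 * ?S"
    unfolding B_def using h1 by (intro sum_infsum_freq_F_le_card_mult[OF c]) (simp add: c_def)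
  have "Linf_norm (\<lambda>x. f x - anova_trunc U f x) \<le> Linf_norm (\<lambda>x. f x - anova_trunc (U_ds ds) f x) + B"
    unfolding B_def using f c U(2)
    by (intro Linf_norm_sub_anova_trunc_le) (simp_all add: in_A_def c_def)
  moreover have "0 \<le> A_norm w f"
    using infsum_nonneg[of UNIV "\<lambda>k. norm (c k)"] S_le by simp
  ultimately have "Linf_norm (\<lambda>x. f x - anova_trunc U f x) / A_norm w f
      \<le> Linf_norm (\<lambda>x. f x - anova_trunc (U_ds ds) f x) / A_norm w f + B / A_norm w f"
    by (simp add: divide_right_mono flip: add_divide_distrib)
  moreover have "B / A_norm w f \<le> sqrt (real (card (U_ds ds - U)) * \<epsilon>1)"
    using B_nonneg B_le_S B_le_card S_le mult_left_mono[OF S_le, of "real (card (U_ds ds - U)) * \<epsilon>1"] e1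
    by (intro divide_le_sqrt) simp_all
  ultimately show ?thesis
    using h2 by linarith
qed

end
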